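(* Let $\rho$ be an $n$-qubit pure target state and let $\hat\sigma$ be an $n$-qubit state with $\mathrm{tr}_n[\rho]=\mathrm{tr}_n[\hat\sigma]$, where $\mathrm{tr}_n$ is the partial trace over the last qubit. Let $U=U_+e^{-i\theta_\mu H}U_-$ be a single-qubit parameterized circuit acting only on the last qubit, where $H$ is a Pauli matrix, and let $\sigma(\boldsymbol{\theta})=(I\otimes U)\hat\sigma(I\otimes U^\dagger)$ and $C_n(\boldsymbol{\theta})=\mathrm{tr}[(\rho-\sigma(\boldsymbol{\theta}))(\rho-\sigma(\boldsymbol{\theta}))^\dagger]$. If the circuit forms a unitary $2$-design (i.e. $U_+$ and $U_-$ are averaged independently over a unitary $2$-design / Haar measure on the last qubit), then $\mathbb{E}[\partial_\mu C_n]=0$ and $\mathrm{Var}[\partial_\mu C_n]\in\left[\frac{16}{27},\frac{8}{9}\right]$, where $\partial_\mu=\partial/\partial\theta_\mu$.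
   Context: A unitary $t$-design is a finite set of unitaries whose average of any homogeneous polynomial of degree at most $t$ in the entries of $U$ and $U^\dagger$ equals the Haar average. Here $I$ is the identity on the first $n-1$ qubits. *)

theory Defs
  imports "HOL-Analysis.Analysis"
begin

text \<open>Matrices are represented as functions nat => nat => complex together with an
explicit dimension d; only entries with indices below d are meaningful.
Qubit ordering: the last qubit is the least significant bit of the index, so a
2^n x 2^n matrix index i corresponds to (first n-1 qubits = i div 2, last qubit = i mod 2).\<close>

type_synonym cmat = "nat \<Rightarrow> nat \<Rightarrow> complex"

definition idm :: cmat where
  "idm i j = (if i = j then 1 else 0)"

definition mmul :: "nat \<Rightarrow> cmat \<Rightarrow> cmat \<Rightarrow> cmat" where
  "mmul d A B = (\<lambda>i j. \<Sum>k<d. A i k * B k j)"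

definition adj :: "cmat \<Rightarrow> cmat" where
  "adj A = (\<lambda>i j. cnj (A j i))"

definition mtrace :: "nat \<Rightarrow> cmat \<Rightarrow> complex" where
  "mtrace d A = (\<Sum>i<d. A i i)"

definition I_kron :: "cmat \<Rightarrow> cmat" where
  "I_kron U = (\<lambda>i j. if i div 2 = j div 2 then U (i mod 2) (j mod 2) else 0)"

definition ptrace_last :: "cmat \<Rightarrow> cmat" where
  "ptrace_last A = (\<lambda>i j. A (2*i) (2*j) + A (2*i+1) (2*j+1))"

definition pure_state :: "nat \<Rightarrow> cmat \<Rightarrow> bool" where
  "pure_state d \<rho> \<longleftrightarrow> (\<exists>v :: nat \<Rightarrow> complex. (\<Sum>i<d. (cmod (v i))\<^sup>2) = 1 \<and>
      (\<forall>i<d. \<forall>j<d. \<rho> i j = v i * cnj (v j)))"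

definition mat2 :: "cmat \<Rightarrow> bool" where
  "mat2 U \<longleftrightarrow> (\<forall>i j. (2 \<le> i \<or> 2 \<le> j) \<longrightarrow> U i j = 0)"

definition unitary2 :: "cmat \<Rightarrow> bool" where
  "unitary2 U \<longleftrightarrow> mat2 U \<and> (\<forall>i<2. \<forall>j<2. mmul 2 (adj U) U i j = idm i j)"

definition pauliX :: cmat where
  "pauliX i j = (if (i = 0 \<and> j = 1) \<or> (i = 1 \<and> j = 0) then 1 else 0)"

definition pauliY :: cmat where
  "pauliY i j = (if i = 0 \<and> j = 1 then - \<i> else if i = 1 \<and> j = 0 then \<i> else 0)"

definition pauliZ :: cmat where
  "pauliZ i j = (if i = 0 \<and> j = 0 then 1 else if i = 1 \<and> j = 1 then -1 else 0)"

definition is_pauli :: "cmat \<Rightarrow> bool" where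
  "is_pauli H \<longleftrightarrow> H = pauliX \<or> H = pauliY \<or> H = pauliZ"

text \<open>exp(-i theta H) for a Pauli matrix H (H^2 = I), written out: cos theta I - i sin theta H.\<close>
definition pauli_rot :: "cmat \<Rightarrow> real \<Rightarrow> cmat" where
  "pauli_rot H \<theta> = (\<lambda>i j. if i < 2 \<and> j < 2
      then complex_of_real (cos \<theta>) * idm i j - \<i> * complex_of_real (sin \<theta>) * H i j else 0)"

text \<open>Haar measure on U(2): U = e^{i phi} [[a, -conj b],[b, conj a]] with
(a,b) = (cos xi e^{i alpha}, sin xi e^{i beta}) uniform on S^3 (Hopf coordinates,
volume element sin xi cos xi), phi uniform on [0, 2 pi].\<close>
definition u2_param :: "real \<Rightarrow> real \<Rightarrow> real \<Rightarrow> real \<Rightarrow> cmat" where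
  "u2_param \<phi> \<xi> \<alpha> \<beta> = (\<lambda>i j. cis \<phi> *
     (if i = 0 \<and> j = 0 then complex_of_real (cos \<xi>) * cis \<alpha>
      else if i = 0 \<and> j = 1 then - complex_of_real (sin \<xi>) * cis (- \<beta>)
      else if i = 1 \<and> j = 0 then complex_of_real (sin \<xi>) * cis \<beta>
      else if i = 1 \<and> j = 1 then complex_of_real (cos \<xi>) * cis (- \<alpha>)
      else 0))"

definition haar_avg :: "(cmat \<Rightarrow> complex) \<Rightarrow> complex" where
  "haar_avg f = complex_of_real (1 / (4 * pi ^ 3)) *
     integral {0..2*pi} (\<lambda>\<phi>. integral {0..pi/2} (\<lambda>\<xi>.
       integral {0..2*pi} (\<lambda>\<alpha>. integral {0..2*pi} (\<lambda>\<beta>.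
         complex_of_real (sin \<xi> * cos \<xi>) * f (u2_param \<phi> \<xi> \<alpha> \<beta>)))))"

text \<open>Polynomials are linear combinations of these, so averaging identities
for all polynomials are equivalent to those for all monomials.\<close>
definition monomial :: "(nat \<times> nat) list \<Rightarrow> (nat \<times> nat) list \<Rightarrow> cmat \<Rightarrow> complex" where
  "monomial xs ys U = prod_list (map (\<lambda>(i,j). U i j) xs) * prod_list (map (\<lambda>(i,j). cnj (U i j)) ys)"

definition unitary_design :: "nat \<Rightarrow> cmat set \<Rightarrow> bool" where
  "unitary_design t D \<longleftrightarrow> finite D \<and> D \<noteq> {} \<and> (\<forall>U\<in>D. unitary2 U) \<and>
     (\<forall>xs ys. length xs \<le> t \<and> length ys \<le> t \<and> set xs \<subseteq> {0..<2} \<times> {0..<2} \<and>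
        set ys \<subseteq> {0..<2} \<times> {0..<2} \<longrightarrow>
        (\<Sum>U\<in>D. monomial xs ys U) / of_nat (card D) = haar_avg (monomial xs ys))"

definition evolve :: "nat \<Rightarrow> cmat \<Rightarrow> cmat \<Rightarrow> cmat" where
  "evolve n U \<sigma>h = mmul (2^n) (mmul (2^n) (I_kron U) \<sigma>h) (adj (I_kron U))"

text \<open>C = tr[(rho - sigma)(rho - sigma)^dagger] (a real number; we take its real part).\<close>
definition cost :: "nat \<Rightarrow> cmat \<Rightarrow> cmat \<Rightarrow> real" where
  "cost n \<rho> \<sigma> = Re (mtrace (2^n) (mmul (2^n) (\<lambda>i j. \<rho> i j - \<sigma> i j) (adj (\<lambda>i j. \<rho> i j - \<sigma> i j))))"

definition C_n :: "nat \<Rightarrow> cmat \<Rightarrow> cmat \<Rightarrow> cmat \<Rightarrow> cmat \<Rightarrow> cmat \<Rightarrow> real \<Rightarrow> real" where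
  "C_n n \<rho> \<sigma>h H Up Um \<theta> =
     cost n \<rho> (evolve n (mmul 2 (mmul 2 Up (pauli_rot H \<theta>)) Um) \<sigma>h)"

definition dC_n :: "nat \<Rightarrow> cmat \<Rightarrow> cmat \<Rightarrow> cmat \<Rightarrow> cmat \<Rightarrow> cmat \<Rightarrow> real \<Rightarrow> real" where
  "dC_n n \<rho> \<sigma>h H Up Um \<theta> = deriv (C_n n \<rho> \<sigma>h H Up Um) \<theta>"

definition expect2 :: "cmat set \<Rightarrow> (cmat \<Rightarrow> cmat \<Rightarrow> real) \<Rightarrow> real" where
  "expect2 D g = (\<Sum>Up\<in>D. \<Sum>Um\<in>D. g Up Um) / (real (card D))^2"

definition variance2 :: "cmat set \<Rightarrow> (cmat \<Rightarrow> cmat \<Rightarrow> real) \<Rightarrow> real" where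
  "variance2 D g = expect2 D (\<lambda>Up Um. (g Up Um)^2) - (expect2 D g)^2"

end

theory Submission
  imports Defs
begin

text \<open>Write sigma_hat = |w><w|, rho = |v><v| and let X be the operator tr_{1..n-1} |w><v| on the last
qubit. Then C_n = 2 - 2 |tr(U_+ Y)|^2 with Y = exp(-i theta H) U_- X, and since exp(-i theta H)
commutes with H the derivative is 2i (conj(tr(U_+ Y)) tr(U_+ H Y) - c.c.). This is a polynomial of
degree (2,2) in the entries of U_+, and after averaging over U_+ only traces of YY^dagger remain,
which are of degree (2,2) in the entries of U_-. So the design property lets one evaluate both
averages with the Weingarten calculus of U(2): the mean vanishes and the second moment is
40/9 (tr P)^2 - 32/9 tr P^2 with P = XX^dagger. Equality of the reduced states on the first n-1
qubits gives P = G^2, where G is the reduced state of sigma_hat on the last qubit. With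
q = det G in [0, 1/4] the variance is 8/9 - 32/9 q + 32/3 q^2, whose range on [0, 1/4] is
[16/27, 8/9].\<close>

section \<open>Haar averages of monomials\<close>

lemma integral_cis_int_multiple:
  fixes l :: int
  shows "integral {0..2*pi} (\<lambda>x. cis (of_int l * x)) = (if l = 0 then 2*pi else 0)"
proof (cases "l = 0")
  case True then show ?thesis by (simp add: scaleR_conv_of_real)
next
  case False
  define f where "f x = cis (of_int l * x) / (\<i> * of_int l)" for x
  have deriv: "(f has_vector_derivative cis (of_int l * x)) (at x within {0..2*pi})" for x
  proof -
    have "((\<lambda>x. cis (of_int l * x)) has_derivative (\<lambda>t. (of_int l * t) *\<^sub>R (\<i> * cis (of_int l * x))))
        (at x within {0..2*pi})"
      by (intro has_derivative_cis derivative_eq_intros) auto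
    then have "((\<lambda>x. cis (of_int l * x)) has_vector_derivative (\<i> * of_int l * cis (of_int l * x)))
        (at x within {0..2*pi})"
      unfolding has_vector_derivative_def
      by (rule has_derivative_eq_rhs) (auto simp: fun_eq_iff scaleR_conv_of_real)
    then have "(f has_vector_derivative (\<i> * of_int l * cis (of_int l * x)) / (\<i> * of_int l))
        (at x within {0..2*pi})"
      unfolding f_def by (intro has_vector_derivative_divide)
    then show ?thesis using False by simp
  qed
  have "((\<lambda>x. cis (of_int l * x)) has_integral (f (2*pi) - f 0)) {0..2*pi}"
    by (rule fundamental_theorem_of_calculus) (auto intro: deriv)
  moreover have "cis (of_int l * (2*pi)) = 1"
    by (metis cis_multiple_2pi mult.commute Ints_of_int)
  then have "f (2*pi) = f 0"
    unfolding f_def by simp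
  ultimately show ?thesis using False by (simp add: integral_unique)
qed

definition cis_period_integral :: "int \<Rightarrow> complex" where
  "cis_period_integral l = (if l = 0 then 2 * of_real pi else 0)"

lemma integral_mult_cis_affine:
  fixes l :: int
  shows "integral {0..2*pi} (\<lambda>x. c * cis (of_int l * x + a)) = c * cis a * cis_period_integral l"
proof -
  have "(\<lambda>x. c * cis (of_int l * x + a)) = (\<lambda>x. (c * cis a) * cis (of_int l * x))"
    by (auto simp: cis_mult [symmetric] algebra_simps)
  then show ?thesis by (simp add: integral_cis_int_multiple cis_period_integral_def)
qed

definition hopf_sign :: "nat \<times> nat \<Rightarrow> complex" where
  "hopf_sign p = (if p = (0,1) then -1 else 1)"

definition hopf_cos_deg :: "nat \<times> nat \<Rightarrow> nat" where
  "hopf_cos_deg p = (if fst p = snd p then 1 else 0)"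

definition hopf_sin_deg :: "nat \<times> nat \<Rightarrow> nat" where
  "hopf_sin_deg p = (if fst p = snd p then 0 else 1)"

definition hopf_alpha_freq :: "nat \<times> nat \<Rightarrow> int" where
  "hopf_alpha_freq p = (if p = (0,0) then 1 else if p = (1,1) then -1 else 0)"

definition hopf_beta_freq :: "nat \<times> nat \<Rightarrow> int" where
  "hopf_beta_freq p = (if p = (0,1) then -1 else if p = (1,0) then 1 else 0)"

lemma u2_param_entry:
  assumes "p \<in> {0..<2} \<times> {0..<2}"
  shows "u2_param \<phi> \<xi> \<alpha> \<beta> (fst p) (snd p) = hopf_sign p *
     complex_of_real (cos \<xi> ^ hopf_cos_deg p * sin \<xi> ^ hopf_sin_deg p) *
     cis (\<phi> + of_int (hopf_alpha_freq p) * \<alpha> + of_int (hopf_beta_freq p) * \<beta>)"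
proof -
  obtain i j where p: "p = (i,j)" "i < 2" "j < 2" using assms by auto
  then have "i = 0 \<or> i = 1" "j = 0 \<or> j = 1" by auto
  then show ?thesis using p
    by (auto simp: u2_param_def hopf_sign_def hopf_cos_deg_def hopf_sin_deg_def hopf_alpha_freq_def
        hopf_beta_freq_def cis_mult [symmetric] algebra_simps diff_conv_add_uminus)
qed

lemma prod_list_u2_param:
  assumes "set xs \<subseteq> {0..<2} \<times> {0..<2}"
  shows "prod_list (map (\<lambda>(i,j). u2_param \<phi> \<xi> \<alpha> \<beta> i j) xs) =
    prod_list (map hopf_sign xs) *
    complex_of_real (cos \<xi> ^ sum_list (map hopf_cos_deg xs) * sin \<xi> ^ sum_list (map hopf_sin_deg xs)) *
    cis (of_nat (length xs) * \<phi> + of_int (sum_list (map hopf_alpha_freq xs)) * \<alpha>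
      + of_int (sum_list (map hopf_beta_freq xs)) * \<beta>)"
  using assms
proof (induction xs)
  case Nil then show ?case by simp
next
  case (Cons p xs)
  have "prod_list (map (\<lambda>(i,j). u2_param \<phi> \<xi> \<alpha> \<beta> i j) (p # xs)) =
     u2_param \<phi> \<xi> \<alpha> \<beta> (fst p) (snd p) * prod_list (map (\<lambda>(i,j). u2_param \<phi> \<xi> \<alpha> \<beta> i j) xs)"
    by (cases p) simp
  then show ?case using Cons u2_param_entry[of p]
    by (simp add: power_add cis_mult [symmetric] algebra_simps)
qed

lemma prod_list_cnj_u2_param:
  assumes "set xs \<subseteq> {0..<2} \<times> {0..<2}"
  shows "prod_list (map (\<lambda>(i,j). cnj (u2_param \<phi> \<xi> \<alpha> \<beta> i j)) xs) =
    prod_list (map hopf_sign xs) *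
    complex_of_real (cos \<xi> ^ sum_list (map hopf_cos_deg xs) * sin \<xi> ^ sum_list (map hopf_sin_deg xs)) *
    cis (- (of_nat (length xs) * \<phi> + of_int (sum_list (map hopf_alpha_freq xs)) * \<alpha>
      + of_int (sum_list (map hopf_beta_freq xs)) * \<beta>))"
proof -
  have "prod_list (map (\<lambda>(i,j). cnj (u2_param \<phi> \<xi> \<alpha> \<beta> i j)) xs) =
        cnj (prod_list (map (\<lambda>(i,j). u2_param \<phi> \<xi> \<alpha> \<beta> i j) xs))"
    by (induction xs) auto
  moreover have "cnj (prod_list (map hopf_sign xs)) = prod_list (map hopf_sign xs)"
    by (induction xs) (auto simp: hopf_sign_def)
  ultimately show ?thesis unfolding prod_list_u2_param[OF assms] by (simp add: cis_cnj)
qed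

definition mono_sign :: "(nat \<times> nat) list \<Rightarrow> (nat \<times> nat) list \<Rightarrow> complex" where
  "mono_sign xs ys = prod_list (map hopf_sign xs) * prod_list (map hopf_sign ys)"

definition mono_cos_deg :: "(nat \<times> nat) list \<Rightarrow> (nat \<times> nat) list \<Rightarrow> nat" where
  "mono_cos_deg xs ys = sum_list (map hopf_cos_deg xs) + sum_list (map hopf_cos_deg ys)"

definition mono_sin_deg :: "(nat \<times> nat) list \<Rightarrow> (nat \<times> nat) list \<Rightarrow> nat" where
  "mono_sin_deg xs ys = sum_list (map hopf_sin_deg xs) + sum_list (map hopf_sin_deg ys)"

definition mono_phase_freq :: "(nat \<times> nat) list \<Rightarrow> (nat \<times> nat) list \<Rightarrow> int" where
  "mono_phase_freq xs ys = int (length xs) - int (length ys)"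

definition mono_alpha_freq :: "(nat \<times> nat) list \<Rightarrow> (nat \<times> nat) list \<Rightarrow> int" where
  "mono_alpha_freq xs ys = sum_list (map hopf_alpha_freq xs) - sum_list (map hopf_alpha_freq ys)"

definition mono_beta_freq :: "(nat \<times> nat) list \<Rightarrow> (nat \<times> nat) list \<Rightarrow> int" where
  "mono_beta_freq xs ys = sum_list (map hopf_beta_freq xs) - sum_list (map hopf_beta_freq ys)"

lemma monomial_u2_param:
  assumes "set xs \<subseteq> {0..<2} \<times> {0..<2}" "set ys \<subseteq> {0..<2} \<times> {0..<2}"
  shows "monomial xs ys (u2_param \<phi> \<xi> \<alpha> \<beta>) = mono_sign xs ys *
    complex_of_real (cos \<xi> ^ mono_cos_deg xs ys * sin \<xi> ^ mono_sin_deg xs ys) *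
    cis (of_int (mono_phase_freq xs ys) * \<phi> + of_int (mono_alpha_freq xs ys) * \<alpha>
      + of_int (mono_beta_freq xs ys) * \<beta>)"
proof -
  define a where "a = of_nat (length xs) * \<phi> + of_int (sum_list (map hopf_alpha_freq xs)) * \<alpha>
    + of_int (sum_list (map hopf_beta_freq xs)) * \<beta>"
  define b where "b = of_nat (length ys) * \<phi> + of_int (sum_list (map hopf_alpha_freq ys)) * \<alpha>
    + of_int (sum_list (map hopf_beta_freq ys)) * \<beta>"
  have phase: "cis a * cis (- b) = cis (of_int (mono_phase_freq xs ys) * \<phi>
      + of_int (mono_alpha_freq xs ys) * \<alpha> + of_int (mono_beta_freq xs ys) * \<beta>)"
    unfolding cis_mult a_def b_def mono_phase_freq_def mono_alpha_freq_def mono_beta_freq_def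
    by (simp add: algebra_simps)
  show ?thesis
    unfolding monomial_def prod_list_u2_param[OF assms(1)] prod_list_cnj_u2_param[OF assms(2)]
      mono_sign_def mono_cos_deg_def mono_sin_deg_def a_def[symmetric] b_def[symmetric] phase[symmetric]
    by (simp add: power_add)
qed

definition hopf_integral :: "nat \<Rightarrow> nat \<Rightarrow> real" where
  "hopf_integral a b = integral {0..pi/2} (\<lambda>\<xi>. sin \<xi> * cos \<xi> * (cos \<xi> ^ a * sin \<xi> ^ b))"

definition monomial_haar_value :: "(nat \<times> nat) list \<Rightarrow> (nat \<times> nat) list \<Rightarrow> complex" where
  "monomial_haar_value xs ys =
    (if mono_phase_freq xs ys = 0 \<and> mono_alpha_freq xs ys = 0 \<and> mono_beta_freq xs ys = 0
     then 2 * mono_sign xs ys * complex_of_real (hopf_integral (mono_cos_deg xs ys) (mono_sin_deg xs ys))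
     else 0)"

lemma haar_avg_monomial:
  assumes "set xs \<subseteq> {0..<2} \<times> {0..<2}" "set ys \<subseteq> {0..<2} \<times> {0..<2}"
  shows "haar_avg (monomial xs ys) = monomial_haar_value xs ys"
proof -
  define S where "S = mono_sign xs ys"
  define A where "A = mono_cos_deg xs ys"
  define B where "B = mono_sin_deg xs ys"
  define K where "K = mono_phase_freq xs ys"
  define M where "M = mono_alpha_freq xs ys"
  define L where "L = mono_beta_freq xs ys"
  define h where "h \<xi> = complex_of_real (sin \<xi> * cos \<xi> * (cos \<xi> ^ A * sin \<xi> ^ B))" for \<xi>
  have beta: "integral {0..2*pi} (\<lambda>\<beta>. complex_of_real (sin \<xi> * cos \<xi>) * monomial xs ys (u2_param \<phi> \<xi> \<alpha> \<beta>))
     = (h \<xi> * S * cis_period_integral L) * cis (of_int K * \<phi> + of_int M * \<alpha>)" for \<phi> \<xi> \<alpha>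
  proof -
    have integrand: "(\<lambda>\<beta>. complex_of_real (sin \<xi> * cos \<xi>) * monomial xs ys (u2_param \<phi> \<xi> \<alpha> \<beta>)) =
      (\<lambda>\<beta>. (h \<xi> * S) * cis (of_int L * \<beta> + (of_int K * \<phi> + of_int M * \<alpha>)))"
      unfolding monomial_u2_param[OF assms] S_def A_def B_def K_def M_def L_def h_def
      by (auto simp: algebra_simps)
    show ?thesis unfolding integrand integral_mult_cis_affine by (simp add: algebra_simps)
  qed
  have alpha: "integral {0..2*pi} (\<lambda>\<alpha>. integral {0..2*pi} (\<lambda>\<beta>.
        complex_of_real (sin \<xi> * cos \<xi>) * monomial xs ys (u2_param \<phi> \<xi> \<alpha> \<beta>)))
     = h \<xi> * (S * cis_period_integral L * cis_period_integral M * cis (of_int K * \<phi>))" for \<phi> \<xi>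
    unfolding beta using integral_mult_cis_affine[of "h \<xi> * S * cis_period_integral L" M "of_int K * \<phi>"]
    by (simp add: algebra_simps)
  have "((\<lambda>\<xi>. sin \<xi> * cos \<xi> * (cos \<xi> ^ A * sin \<xi> ^ B)) has_integral hopf_integral A B) {0..pi/2}"
    unfolding hopf_integral_def
    by (intro integrable_integral integrable_continuous_interval continuous_intros)
  then have "(h has_integral complex_of_real (hopf_integral A B)) {0..pi/2}"
    unfolding h_def by (rule has_integral_of_real)
  then have xi: "integral {0..pi/2} h = complex_of_real (hopf_integral A B)"
    by (rule integral_unique)
  have "haar_avg (monomial xs ys) = S * complex_of_real (hopf_integral A B) *
      (cis_period_integral K * cis_period_integral M * cis_period_integral L / complex_of_real (4 * pi ^ 3))"
    unfolding haar_avg_def alpha integral_mult_left xi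
    using integral_mult_cis_affine
      [of "complex_of_real (hopf_integral A B) * S * cis_period_integral L * cis_period_integral M" K 0]
    by (simp add: field_simps)
  then show ?thesis
    unfolding monomial_haar_value_def S_def A_def B_def K_def M_def L_def
    by (auto simp: cis_period_integral_def field_simps power3_eq_cube)
qed

lemma hopf_integral_antiderivative:
  assumes "\<And>x. (F has_real_derivative sin x * cos x * (cos x ^ a * sin x ^ b)) (at x)"
  shows "hopf_integral a b = F (pi/2) - F 0"
  unfolding hopf_integral_def
  by (intro integral_unique fundamental_theorem_of_calculus)
     (auto intro: has_vector_derivative_at_within assms[unfolded has_real_derivative_iff_has_vector_derivative])

lemma hopf_integral_values:
  "hopf_integral 2 0 = 1/4" "hopf_integral 0 2 = 1/4"
  "hopf_integral 4 0 = 1/6" "hopf_integral 0 4 = 1/6" "hopf_integral 2 2 = 1/12"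
proof -
  show "hopf_integral 2 0 = 1/4"
    by (subst hopf_integral_antiderivative[where F = "\<lambda>x. - (cos x ^ 4) / 4"])
       (auto intro!: derivative_eq_intros simp: eval_nat_numeral)
  show "hopf_integral 0 2 = 1/4"
    by (subst hopf_integral_antiderivative[where F = "\<lambda>x. sin x ^ 4 / 4"])
       (auto intro!: derivative_eq_intros simp: eval_nat_numeral)
  show "hopf_integral 4 0 = 1/6"
    by (subst hopf_integral_antiderivative[where F = "\<lambda>x. - (cos x ^ 6) / 6"])
       (auto intro!: derivative_eq_intros simp: eval_nat_numeral)
  show "hopf_integral 0 4 = 1/6"
    by (subst hopf_integral_antiderivative[where F = "\<lambda>x. sin x ^ 6 / 6"])
       (auto intro!: derivative_eq_intros simp: eval_nat_numeral)
  have "((\<lambda>x. sin x ^ 4 / 4 - sin x ^ 6 / 6) has_real_derivative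
      sin x * cos x * (cos x ^ 2 * sin x ^ 2)) (at x)" for x
    using sin_cos_squared_add[of x]
    by (auto intro!: derivative_eq_intros simp: eval_nat_numeral) algebra
  then show "hopf_integral 2 2 = 1/12"
    by (subst hopf_integral_antiderivative) auto
qed

text \<open>The degrees computed by simp from concrete index lists come out as Suc-numerals.\<close>

lemma hopf_integral_values_Suc:
  "hopf_integral (Suc (Suc 0)) 0 = 1/4" "hopf_integral 0 (Suc (Suc 0)) = 1/4"
  "hopf_integral (Suc (Suc (Suc (Suc 0)))) 0 = 1/6" "hopf_integral 0 (Suc (Suc (Suc (Suc 0)))) = 1/6"
  "hopf_integral (Suc (Suc 0)) (Suc (Suc 0)) = 1/12"
  using hopf_integral_values by (simp_all add: numeral_eq_Suc)

section \<open>Low moments of a unitary 2-design\<close>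

definition design_avg :: "cmat set \<Rightarrow> (cmat \<Rightarrow> complex) \<Rightarrow> complex" where
  "design_avg D F = (\<Sum>U\<in>D. F U) / of_nat (card D)"

lemma design_avg_sum: "finite S \<Longrightarrow> design_avg D (\<lambda>U. \<Sum>x\<in>S. F x U) = (\<Sum>x\<in>S. design_avg D (F x))"
  unfolding design_avg_def by (subst sum.swap) (simp add: sum_divide_distrib)

lemma design_avg_mult_left: "design_avg D (\<lambda>U. c * F U) = c * design_avg D F"
  unfolding design_avg_def by (simp add: sum_distrib_left)

lemma design_avg_add: "design_avg D (\<lambda>U. F U + G U) = design_avg D F + design_avg D G"
  unfolding design_avg_def by (simp add: sum.distrib add_divide_distrib)

lemma design_avg_diff: "design_avg D (\<lambda>U. F U - G U) = design_avg D F - design_avg D G"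
  unfolding design_avg_def by (simp add: sum_subtractf diff_divide_distrib)

lemma design_avg_cong: "(\<And>U. U \<in> D \<Longrightarrow> F U = G U) \<Longrightarrow> design_avg D F = design_avg D G"
  unfolding design_avg_def by (metis (no_types, lifting) sum.cong)

lemma design_avg_const: "finite D \<Longrightarrow> D \<noteq> {} \<Longrightarrow> design_avg D (\<lambda>U. c) = c"
  unfolding design_avg_def by simp

lemma expect2_eq_design_avg:
  "complex_of_real (expect2 D f) = design_avg D (\<lambda>Um. design_avg D (\<lambda>Up. complex_of_real (f Up Um)))"
proof -
  have "design_avg D (\<lambda>Um. design_avg D (\<lambda>Up. complex_of_real (f Up Um))) =
        (\<Sum>Um\<in>D. \<Sum>Up\<in>D. complex_of_real (f Up Um)) / (of_nat (card D))^2"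
    unfolding design_avg_def by (simp add: sum_divide_distrib[symmetric] power2_eq_square)
  also have "\<dots> = complex_of_real (expect2 D f)"
    unfolding expect2_def by (subst sum.swap) simp
  finally show ?thesis ..
qed

lemma design_avg_monomial:
  assumes "unitary_design 2 D" "length xs \<le> 2" "length ys \<le> 2"
    "set xs \<subseteq> {0..<2} \<times> {0..<2}" "set ys \<subseteq> {0..<2} \<times> {0..<2}"
  shows "design_avg D (monomial xs ys) = monomial_haar_value xs ys"
  using assms haar_avg_monomial[OF assms(4,5)] unfolding unitary_design_def design_avg_def by metis

lemma index_2_cases: "(i::nat) < 2 \<Longrightarrow> i = 0 \<or> i = 1"
  by auto

lemmas mono_data_defs = monomial_haar_value_def mono_sign_def mono_cos_deg_def mono_sin_deg_def
  mono_phase_freq_def mono_alpha_freq_def mono_beta_freq_def hopf_sign_def hopf_cos_deg_def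
  hopf_sin_deg_def hopf_alpha_freq_def hopf_beta_freq_def

lemma design_moment1:
  assumes "unitary_design 2 D" "i < 2" "j < 2" "k < 2" "l < 2"
  shows "design_avg D (\<lambda>U. U i j * cnj (U k l)) = idm i k * idm j l / 2"
proof -
  let ?xs = "[(i,j)]" and ?ys = "[(k,l)]"
  have sets: "set ?xs \<subseteq> {0..<2} \<times> {0..<2}" "set ?ys \<subseteq> {0..<2} \<times> {0..<2}"
    using assms by auto
  have "design_avg D (\<lambda>U. U i j * cnj (U k l)) = design_avg D (monomial ?xs ?ys)"
    by (rule arg_cong[where f="design_avg D"]) (auto simp: fun_eq_iff monomial_def)
  also have "\<dots> = monomial_haar_value ?xs ?ys"
    by (rule design_avg_monomial[OF assms(1) _ _ sets]) auto
  also have "\<dots> = idm i k * idm j l / 2"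
    using assms(2-5)[THEN index_2_cases]
    by (elim disjE; simp add: mono_data_defs idm_def hopf_integral_values_Suc)
  finally show ?thesis .
qed

text \<open>The Weingarten function of U(2) is 1/(d^2-1) = 1/3 on the identity permutation and
-1/(d(d^2-1)) = -1/6 on the swap.\<close>

definition weingarten2 :: "nat \<Rightarrow> nat \<Rightarrow> nat \<Rightarrow> nat \<Rightarrow> nat \<Rightarrow> nat \<Rightarrow> nat \<Rightarrow> nat \<Rightarrow> complex" where
  "weingarten2 i1 j1 i2 j2 k1 l1 k2 l2 =
    (idm i1 k1 * idm i2 k2 * idm j1 l1 * idm j2 l2 + idm i1 k2 * idm i2 k1 * idm j1 l2 * idm j2 l1) / 3
  - (idm i1 k1 * idm i2 k2 * idm j1 l2 * idm j2 l1 + idm i1 k2 * idm i2 k1 * idm j1 l1 * idm j2 l2) / 6"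

lemma design_moment2:
  assumes "unitary_design 2 D" "i1 < 2" "j1 < 2" "i2 < 2" "j2 < 2" "k1 < 2" "l1 < 2" "k2 < 2" "l2 < 2"
  shows "design_avg D (\<lambda>U. U i1 j1 * U i2 j2 * cnj (U k1 l1) * cnj (U k2 l2)) =
    weingarten2 i1 j1 i2 j2 k1 l1 k2 l2"
proof -
  let ?xs = "[(i1,j1),(i2,j2)]" and ?ys = "[(k1,l1),(k2,l2)]"
  have sets: "set ?xs \<subseteq> {0..<2} \<times> {0..<2}" "set ?ys \<subseteq> {0..<2} \<times> {0..<2}"
    using assms by auto
  have "design_avg D (\<lambda>U. U i1 j1 * U i2 j2 * cnj (U k1 l1) * cnj (U k2 l2)) = design_avg D (monomial ?xs ?ys)"
    by (rule arg_cong[where f="design_avg D"]) (auto simp: fun_eq_iff monomial_def mult.assoc)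
  also have "\<dots> = monomial_haar_value ?xs ?ys"
    by (rule design_avg_monomial[OF assms(1) _ _ sets]) auto
  also have "\<dots> = weingarten2 i1 j1 i2 j2 k1 l1 k2 l2"
    using assms(2-9)[THEN index_2_cases]
    by (elim disjE; simp add: mono_data_defs idm_def weingarten2_def hopf_integral_values_Suc)
  finally show ?thesis .
qed

lemma sum_lessThan_2: "(\<Sum>i<2. f i) = f 0 + f (1::nat)"
  by (simp add: numeral_2_eq_2)

lemma mmul_assoc: "mmul d1 (mmul d2 A B) C = mmul d2 A (mmul d1 B C)"
  unfolding mmul_def
  by (auto simp: fun_eq_iff sum_distrib_left sum_distrib_right mult.assoc intro: sum.swap)

lemma adj_mmul: "adj (mmul d A B) = mmul d (adj B) (adj A)"
  unfolding mmul_def adj_def by (auto simp: fun_eq_iff mult.commute)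

lemma mtrace_mmul_commute: "mtrace d1 (mmul d2 A B) = mtrace d2 (mmul d1 B A)"
  unfolding mtrace_def mmul_def by (subst sum.swap) (simp add: mult.commute)

lemma mat2_mmul: "mat2 A \<Longrightarrow> mat2 B \<Longrightarrow> mat2 (mmul 2 A B)"
  unfolding mat2_def mmul_def by auto

lemma mat2_adj: "mat2 A \<Longrightarrow> mat2 (adj A)"
  unfolding mat2_def adj_def by auto

lemma mat2_pauli: "is_pauli H \<Longrightarrow> mat2 H"
  unfolding is_pauli_def mat2_def pauliX_def pauliY_def pauliZ_def by auto

lemma adj_pauli: "is_pauli H \<Longrightarrow> adj H = H"
  unfolding is_pauli_def adj_def pauliX_def pauliY_def pauliZ_def by (auto simp: fun_eq_iff)

lemma unitary2_cancel_left:
  assumes "unitary2 R" "mat2 B"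
  shows "mmul 2 (adj R) (mmul 2 R B) = B"
proof (intro ext)
  fix i j
  have "mmul 2 (adj R) (mmul 2 R B) i j = (\<Sum>l<2. mmul 2 (adj R) R i l * B l j)"
    using mmul_assoc[of 2 2 "adj R" R B] unfolding mmul_def by (metis (no_types))
  also have "\<dots> = B i j"
  proof (cases "i < 2")
    case True
    then have "(\<Sum>l<2. mmul 2 (adj R) R i l * B l j) = (\<Sum>l<2. idm i l * B l j)"
      using assms(1) unfolding unitary2_def by (intro sum.cong) auto
    also have "\<dots> = B i j" using index_2_cases[OF True] unfolding idm_def by (auto simp: sum_lessThan_2)
    finally show ?thesis .
  next
    case False
    then show ?thesis using assms unfolding unitary2_def mmul_def adj_def mat2_def by auto
  qed
  finally show "mmul 2 (adj R) (mmul 2 R B) i j = B i j" .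
qed

lemma mtrace_unitary_conj:
  assumes "unitary2 R"
  shows "mtrace 2 (mmul 2 R (mmul 2 M (adj R))) = mtrace 2 M"
proof -
  have "mtrace 2 (mmul 2 R (mmul 2 M (adj R))) = mtrace 2 (mmul 2 M (mmul 2 (adj R) R))"
    by (simp add: mtrace_mmul_commute[of 2 2 R] mmul_assoc)
  also have "\<dots> = (\<Sum>i<2. \<Sum>k<2. M i k * idm k i)"
    unfolding mtrace_def mmul_def using assms unfolding unitary2_def
    by (intro sum.cong refl) (auto simp: mmul_def)
  also have "\<dots> = mtrace 2 M" unfolding mtrace_def idm_def by (simp add: sum_lessThan_2)
  finally show ?thesis .
qed

lemma unitary2_mmul:
  assumes "unitary2 A" "unitary2 B"
  shows "unitary2 (mmul 2 A B)"
proof -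
  have "mmul 2 (adj (mmul 2 A B)) (mmul 2 A B) = mmul 2 (adj B) (mmul 2 (adj A) (mmul 2 A B))"
    by (simp add: adj_mmul mmul_assoc)
  also have "\<dots> = mmul 2 (adj B) B"
    using unitary2_cancel_left[OF assms(1)] assms(2) unfolding unitary2_def by simp
  finally show ?thesis using assms mat2_mmul unfolding unitary2_def by simp
qed

lemma unitary2_pauli_rot:
  assumes "is_pauli H"
  shows "unitary2 (pauli_rot H \<theta>)"
proof -
  have "complex_of_real (cos \<theta>) * complex_of_real (cos \<theta>) +
      complex_of_real (sin \<theta>) * complex_of_real (sin \<theta>) = 1"
    by (metis sin_cos_squared_add3 of_real_1 of_real_add of_real_mult)
  then show ?thesis
    using assms unfolding unitary2_def mat2_def is_pauli_def
    by (auto simp: mmul_def adj_def pauli_rot_def sum_lessThan_2 idm_def pauliX_def pauliY_def pauliZ_def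
        algebra_simps elim!: index_2_cases[elim_format])
qed

lemma pauli_mmul_self:
  assumes "is_pauli H" "mat2 B"
  shows "mmul 2 H (mmul 2 H B) = B"
  using assms unfolding is_pauli_def mat2_def
  by (auto simp: fun_eq_iff mmul_def pauliX_def pauliY_def pauliZ_def sum_lessThan_2)

lemma pauli_rot_commute:
  assumes "is_pauli H"
  shows "mmul 2 H (pauli_rot H \<theta>) = mmul 2 (pauli_rot H \<theta>) H"
  using assms unfolding is_pauli_def
  by (auto simp: fun_eq_iff mmul_def pauli_rot_def pauliX_def pauliY_def pauliZ_def sum_lessThan_2 idm_def)

section \<open>Twirling identities\<close>

definition tr_prod :: "cmat \<Rightarrow> cmat \<Rightarrow> complex" where
  "tr_prod U A = mtrace 2 (mmul 2 U A)"

lemma tr_prod_sum: "tr_prod U A = (\<Sum>i<2. \<Sum>j<2. U i j * A j i)"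
  unfolding tr_prod_def mtrace_def mmul_def ..

lemma design_avg_tr_prod_cnj:
  assumes "unitary_design 2 D"
  shows "design_avg D (\<lambda>U. tr_prod U A * cnj (tr_prod U B)) = mtrace 2 (mmul 2 A (adj B)) / 2"
proof -
  have "design_avg D (\<lambda>U. tr_prod U A * cnj (tr_prod U B)) =
     design_avg D (\<lambda>U. \<Sum>i<2. \<Sum>j<2. \<Sum>k<2. \<Sum>l<2. (A j i * cnj (B l k)) * (U i j * cnj (U k l)))"
    unfolding tr_prod_sum by (rule arg_cong[where f="design_avg D"]) (simp add: fun_eq_iff sum_lessThan_2 algebra_simps)
  also have "\<dots> = (\<Sum>i<2. \<Sum>j<2. \<Sum>k<2. \<Sum>l<2. (A j i * cnj (B l k)) * (idm i k * idm j l / 2))"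
    by (simp add: design_avg_sum design_avg_mult_left design_moment1[OF assms])
  also have "\<dots> = mtrace 2 (mmul 2 A (adj B)) / 2"
    unfolding mtrace_def mmul_def adj_def by (simp add: sum_lessThan_2 idm_def algebra_simps)
  finally show ?thesis .
qed

definition tr4_moment :: "cmat \<Rightarrow> cmat \<Rightarrow> cmat \<Rightarrow> cmat \<Rightarrow> complex" where
  "tr4_moment A B C E =
    (mtrace 2 (mmul 2 A (adj C)) * mtrace 2 (mmul 2 B (adj E))
      + mtrace 2 (mmul 2 A (adj E)) * mtrace 2 (mmul 2 B (adj C))) / 3
  - (mtrace 2 (mmul 2 (mmul 2 (mmul 2 A (adj C)) B) (adj E))
      + mtrace 2 (mmul 2 (mmul 2 (mmul 2 A (adj E)) B) (adj C))) / 6"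

lemma design_avg_tr_prod4:
  assumes "unitary_design 2 D"
  shows "design_avg D (\<lambda>U. tr_prod U A * tr_prod U B * cnj (tr_prod U C) * cnj (tr_prod U E)) =
    tr4_moment A B C E"
proof -
  have "tr_prod U A * tr_prod U B * cnj (tr_prod U C) * cnj (tr_prod U E) =
     (\<Sum>k2<2. \<Sum>l2<2. \<Sum>k1<2. \<Sum>l1<2. \<Sum>i2<2. \<Sum>j2<2. \<Sum>i1<2. \<Sum>j1<2.
       (A j1 i1 * B j2 i2 * cnj (C l1 k1) * cnj (E l2 k2)) *
       (U i1 j1 * U i2 j2 * cnj (U k1 l1) * cnj (U k2 l2)))" for U
    unfolding tr_prod_sum cnj_sum sum_distrib_left sum_distrib_right by (simp add: ac_simps)
  then have "design_avg D (\<lambda>U. tr_prod U A * tr_prod U B * cnj (tr_prod U C) * cnj (tr_prod U E)) =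
     (\<Sum>k2<2. \<Sum>l2<2. \<Sum>k1<2. \<Sum>l1<2. \<Sum>i2<2. \<Sum>j2<2. \<Sum>i1<2. \<Sum>j1<2.
       (A j1 i1 * B j2 i2 * cnj (C l1 k1) * cnj (E l2 k2)) * weingarten2 i1 j1 i2 j2 k1 l1 k2 l2)"
    by (simp add: design_avg_sum design_avg_mult_left design_moment2[OF assms])
  also have "\<dots> = tr4_moment A B C E"
    unfolding tr4_moment_def mtrace_def mmul_def adj_def
    by (simp add: sum_lessThan_2 idm_def weingarten2_def) (simp add: field_simps)
  finally show ?thesis .
qed

definition tr_conj_prod :: "cmat \<Rightarrow> cmat \<Rightarrow> cmat \<Rightarrow> complex" where
  "tr_conj_prod U A B = mtrace 2 (mmul 2 (mmul 2 (mmul 2 A U) B) (adj U))"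

definition conj_moment :: "cmat \<Rightarrow> cmat \<Rightarrow> cmat \<Rightarrow> cmat \<Rightarrow> complex" where
  "conj_moment A B C E =
    (mtrace 2 A * mtrace 2 B * mtrace 2 C * mtrace 2 E + mtrace 2 (mmul 2 A C) * mtrace 2 (mmul 2 B E)) / 3
  - (mtrace 2 A * mtrace 2 C * mtrace 2 (mmul 2 B E) + mtrace 2 (mmul 2 A C) * mtrace 2 B * mtrace 2 E) / 6"

lemma design_avg_tr_conj_prod2:
  assumes "unitary_design 2 D"
  shows "design_avg D (\<lambda>U. tr_conj_prod U A B * tr_conj_prod U C E) = conj_moment A B C E"
proof -
  have "tr_conj_prod U A B * tr_conj_prod U C E =
     (\<Sum>x'<2. \<Sum>k'<2. \<Sum>j'<2. \<Sum>i'<2. \<Sum>x<2. \<Sum>k<2. \<Sum>j<2. \<Sum>i<2.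
       (A x i * B j k * C x' i' * E j' k') * (U i j * U i' j' * cnj (U x k) * cnj (U x' k')))" for U
    unfolding tr_conj_prod_def mtrace_def mmul_def adj_def sum_distrib_left sum_distrib_right
    by (simp add: ac_simps)
  then have "design_avg D (\<lambda>U. tr_conj_prod U A B * tr_conj_prod U C E) =
     (\<Sum>x'<2. \<Sum>k'<2. \<Sum>j'<2. \<Sum>i'<2. \<Sum>x<2. \<Sum>k<2. \<Sum>j<2. \<Sum>i<2.
       (A x i * B j k * C x' i' * E j' k') * weingarten2 i j i' j' x k x' k')"
    by (simp add: design_avg_sum design_avg_mult_left design_moment2[OF assms])
  also have "\<dots> = conj_moment A B C E"
    unfolding conj_moment_def mtrace_def mmul_def adj_def
    by (simp add: sum_lessThan_2 idm_def weingarten2_def) (simp add: field_simps)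
  finally show ?thesis .
qed

text \<open>If a(t) has derivative -i b(t), then 2 - 2 |a(t)|^2 has derivative cost_slope (a t) (b t).\<close>

definition cost_slope :: "complex \<Rightarrow> complex \<Rightarrow> complex" where
  "cost_slope a b = 2 * \<i> * (cnj a * b - a * cnj b)"

lemma deriv_cost_rotation:
  fixes F0 F1 :: complex
  assumes "\<And>t. C t = 2 - 2 * (cmod (complex_of_real (cos t) * F0 - \<i> * complex_of_real (sin t) * F1))\<^sup>2"
  shows "complex_of_real (deriv C \<theta>) =
    cost_slope (complex_of_real (cos \<theta>) * F0 - \<i> * complex_of_real (sin \<theta>) * F1)
               (complex_of_real (cos \<theta>) * F1 - \<i> * complex_of_real (sin \<theta>) * F0)"
proof -
  define a0 where "a0 = Re F0"
  define b0 where "b0 = Im F0"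
  define a1 where "a1 = Re F1"
  define b1 where "b1 = Im F1"
  have C: "C = (\<lambda>t. 2 - 2 * ((cos t * a0 + sin t * b1)^2 + (cos t * b0 - sin t * a1)^2))"
    unfolding assms cmod_power2 a0_def b0_def a1_def b1_def by (auto simp: fun_eq_iff)
  have "(C has_real_derivative
     (- 2 * (2 * (cos \<theta> * a0 + sin \<theta> * b1) * (- sin \<theta> * a0 + cos \<theta> * b1)
            + 2 * (cos \<theta> * b0 - sin \<theta> * a1) * (- sin \<theta> * b0 - cos \<theta> * a1)))) (at \<theta>)"
    unfolding C by (auto intro!: derivative_eq_intros simp: algebra_simps)
  then show ?thesis
    by (simp add: DERIV_imp_deriv cost_slope_def complex_eq_iff a0_def b0_def a1_def b1_def algebra_simps)
qed

lemma design_avg_cost_slope_eq_0: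
  assumes "unitary_design 2 D" "adj H = H"
  shows "design_avg D (\<lambda>U. cost_slope (tr_prod U Y) (tr_prod U (mmul 2 H Y))) = 0"
proof -
  let ?Z = "mmul 2 H Y"
  have "design_avg D (\<lambda>U. cost_slope (tr_prod U Y) (tr_prod U ?Z)) =
      2 * \<i> * (design_avg D (\<lambda>U. tr_prod U ?Z * cnj (tr_prod U Y))
        - design_avg D (\<lambda>U. tr_prod U Y * cnj (tr_prod U ?Z)))"
    unfolding cost_slope_def by (simp add: design_avg_mult_left design_avg_diff mult.commute)
  also have "\<dots> = \<i> * (mtrace 2 (mmul 2 ?Z (adj Y)) - mtrace 2 (mmul 2 Y (adj ?Z)))"
    unfolding design_avg_tr_prod_cnj[OF assms(1)] by (simp add: algebra_simps)
  also have "mtrace 2 (mmul 2 ?Z (adj Y)) = mtrace 2 (mmul 2 Y (adj ?Z))"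
    using mtrace_mmul_commute[of 2 2 H "mmul 2 Y (adj Y)"] by (simp add: adj_mmul mmul_assoc assms(2))
  finally show ?thesis by simp
qed

lemma design_avg_cost_slope_sq:
  fixes Y :: cmat
  assumes "unitary_design 2 D" "is_pauli H"
  defines "K \<equiv> mmul 2 Y (adj Y)"
  shows "design_avg D (\<lambda>U. (cost_slope (tr_prod U Y) (tr_prod U (mmul 2 H Y)))\<^sup>2) =
    4 * (mtrace 2 K)\<^sup>2 - 8/3 * mtrace 2 (mmul 2 K K) - 4/3 * (mtrace 2 (mmul 2 H K))\<^sup>2"
proof -
  let ?Z = "mmul 2 H Y"
  have "design_avg D (\<lambda>U. (cost_slope (tr_prod U Y) (tr_prod U ?Z))\<^sup>2) =
    design_avg D (\<lambda>U. -4 * ((tr_prod U ?Z * tr_prod U ?Z * cnj (tr_prod U Y) * cnj (tr_prod U Y)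
        - 2 * (tr_prod U Y * tr_prod U ?Z * cnj (tr_prod U Y) * cnj (tr_prod U ?Z)))
        + tr_prod U Y * tr_prod U Y * cnj (tr_prod U ?Z) * cnj (tr_prod U ?Z)))"
    unfolding cost_slope_def
    by (rule arg_cong[where f="design_avg D"]) (simp add: fun_eq_iff power2_eq_square algebra_simps)
  also have "\<dots> = -4 * (tr4_moment ?Z ?Z Y Y - 2 * tr4_moment Y ?Z Y ?Z + tr4_moment Y Y ?Z ?Z)"
    by (simp add: design_avg_mult_left design_avg_diff design_avg_add design_avg_tr_prod4[OF assms(1)])
  also have "\<dots> = 4 * (mtrace 2 K)\<^sup>2 - 8/3 * mtrace 2 (mmul 2 K K) - 4/3 * (mtrace 2 (mmul 2 H K))\<^sup>2"
    \<comment> \<open>via tr(HKHK) = (tr HK)^2 + (tr K)^2 - tr K^2, valid for every Pauli matrix H\<close>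
    using assms(2) unfolding is_pauli_def K_def tr4_moment_def
    by (elim disjE; simp add: mtrace_def mmul_def adj_def sum_lessThan_2 pauliX_def pauliY_def pauliZ_def
        power2_eq_square algebra_simps)
  finally show ?thesis .
qed

lemma design_avg_tr_pauli_conj_sq:
  assumes "unitary_design 2 D" "is_pauli H"
  shows "design_avg D (\<lambda>U. (tr_conj_prod U H P)\<^sup>2) = (2 * mtrace 2 (mmul 2 P P) - (mtrace 2 P)\<^sup>2) / 3"
proof -
  have "mtrace 2 H = 0" "mtrace 2 (mmul 2 H H) = 2"
    using assms(2) unfolding is_pauli_def
    by (auto simp: mtrace_def mmul_def sum_lessThan_2 pauliX_def pauliY_def pauliZ_def)
  then show ?thesis
    using design_avg_tr_conj_prod2[OF assms(1), of H P H P]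
    by (simp add: power2_eq_square conj_moment_def field_simps)
qed

lemma rotated_conj_traces:
  fixes \<theta> :: real
  assumes "unitary2 U" "is_pauli H" "mat2 X"
  defines "Y \<equiv> mmul 2 (pauli_rot H \<theta>) (mmul 2 U X)" and "P \<equiv> mmul 2 X (adj X)"
  shows "mtrace 2 (mmul 2 Y (adj Y)) = mtrace 2 P"
    and "mtrace 2 (mmul 2 (mmul 2 Y (adj Y)) (mmul 2 Y (adj Y))) = mtrace 2 (mmul 2 P P)"
    and "mtrace 2 (mmul 2 H (mmul 2 Y (adj Y))) = tr_conj_prod U H P"
proof -
  define R where "R = pauli_rot H \<theta>"
  define V where "V = mmul 2 R U"
  have V: "unitary2 V" unfolding V_def R_def by (intro unitary2_mmul unitary2_pauli_rot assms)
  have mP: "mat2 P" unfolding P_def by (intro mat2_mmul mat2_adj assms(3))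
  have YY: "mmul 2 Y (adj Y) = mmul 2 V (mmul 2 P (adj V))"
    unfolding Y_def P_def V_def R_def by (simp add: adj_mmul mmul_assoc)
  show "mtrace 2 (mmul 2 Y (adj Y)) = mtrace 2 P"
    unfolding YY by (rule mtrace_unitary_conj[OF V])
  have "mmul 2 (mmul 2 Y (adj Y)) (mmul 2 Y (adj Y)) = mmul 2 V (mmul 2 (mmul 2 P P) (adj V))"
    unfolding YY using unitary2_cancel_left[OF V, of "mmul 2 P (adj V)"] mP V
    by (simp add: mmul_assoc mat2_mmul mat2_adj unitary2_def)
  then show "mtrace 2 (mmul 2 (mmul 2 Y (adj Y)) (mmul 2 Y (adj Y))) = mtrace 2 (mmul 2 P P)"
    using mtrace_unitary_conj[OF V] by simp
  have R: "unitary2 R" unfolding R_def by (rule unitary2_pauli_rot[OF assms(2)])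
  have RHR: "mmul 2 (adj R) (mmul 2 H R) = H"
    using unitary2_cancel_left[OF R mat2_pauli[OF assms(2)]] pauli_rot_commute[OF assms(2)]
    unfolding R_def by (simp add: mmul_assoc[symmetric])
  have "mtrace 2 (mmul 2 H (mmul 2 Y (adj Y))) =
      mtrace 2 (mmul 2 (mmul 2 (adj R) (mmul 2 H R)) (mmul 2 U (mmul 2 P (adj U))))"
    using mtrace_mmul_commute[of 2 2 "adj R"] unfolding YY V_def by (simp add: adj_mmul mmul_assoc)
  then show "mtrace 2 (mmul 2 H (mmul 2 Y (adj Y))) = tr_conj_prod U H P"
    unfolding RHR tr_conj_prod_def by (simp add: mmul_assoc)
qed

lemma sum_lessThan_double: "(\<Sum>i<2*(d::nat). F i) = (\<Sum>a<d. F (2*a) + F (2*a+1))"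
proof (induction d)
  case 0 then show ?case by simp
next
  case (Suc d)
  have "{..<2 * Suc d} = insert (2*d+1) (insert (2*d) {..<2*d})" by auto
  then show ?case using Suc by (simp add: ac_simps)
qed

lemma pure_state_vector:
  assumes "pure_state N \<rho>"
  obtains v where "(\<Sum>i<N. v i * cnj (v i)) = 1" "\<forall>i<N. \<forall>j<N. \<rho> i j = v i * cnj (v j)"
proof -
  obtain v where v: "(\<Sum>i<N. (cmod (v i))\<^sup>2) = 1" "\<forall>i<N. \<forall>j<N. \<rho> i j = v i * cnj (v j)"
    using assms unfolding pure_state_def by blast
  have "(\<Sum>i<N. v i * cnj (v i)) = complex_of_real (\<Sum>i<N. (cmod (v i))\<^sup>2)"
    unfolding of_real_sum complex_norm_square ..
  with v that show ?thesis by simp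
qed

lemma cost_pure_states:
  assumes "N = 2^n"
    and "\<forall>i<N. \<forall>j<N. \<rho> i j = v i * cnj (v j)" "\<forall>i<N. \<forall>j<N. \<sigma> i j = u i * cnj (u j)"
    and "(\<Sum>i<N. v i * cnj (v i)) = 1" "(\<Sum>i<N. u i * cnj (u i)) = 1"
  shows "cost n \<rho> \<sigma> = 2 - 2 * (cmod (\<Sum>i<N. cnj (v i) * u i))\<^sup>2"
proof -
  define f where "f = (\<Sum>i<N. cnj (v i) * u i)"
  have cnj_f: "cnj f = (\<Sum>i<N. v i * cnj (u i))" unfolding f_def cnj_sum by simp
  have "mtrace (2^n) (mmul (2^n) (\<lambda>i j. \<rho> i j - \<sigma> i j) (adj (\<lambda>i j. \<rho> i j - \<sigma> i j))) =
    (\<Sum>i<N. \<Sum>k<N. (v i * cnj (v i)) * (v k * cnj (v k)) - (v i * cnj (u i)) * (cnj (v k) * u k)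
        - (cnj (v i) * u i) * (v k * cnj (u k)) + (u i * cnj (u i)) * (u k * cnj (u k)))"
    unfolding mtrace_def mmul_def adj_def assms(1)[symmetric]
    using assms(2,3) by (intro sum.cong refl) (simp add: algebra_simps)
  also have "\<dots> = (\<Sum>i<N. v i * cnj (v i)) * (\<Sum>k<N. v k * cnj (v k))
      - (\<Sum>i<N. v i * cnj (u i)) * (\<Sum>k<N. cnj (v k) * u k)
      - (\<Sum>i<N. cnj (v i) * u i) * (\<Sum>k<N. v k * cnj (u k))
      + (\<Sum>i<N. u i * cnj (u i)) * (\<Sum>k<N. u k * cnj (u k))"
    by (simp add: sum_product sum.distrib sum_subtractf)
  also have "\<dots> = 2 - 2 * (f * cnj f)"
    unfolding assms(4,5) cnj_f[symmetric] f_def[symmetric] by simp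
  also have "\<dots> = complex_of_real (2 - 2 * (cmod f)\<^sup>2)"
    unfolding complex_norm_square[symmetric] by simp
  finally show ?thesis unfolding cost_def f_def[symmetric] by simp
qed

text \<open>apply_last U w is the vector (I \<otimes> U) w.\<close>

definition apply_last :: "cmat \<Rightarrow> (nat \<Rightarrow> complex) \<Rightarrow> nat \<Rightarrow> complex" where
  "apply_last U w i = (\<Sum>t<2. U (i mod 2) t * w (2 * (i div 2) + t))"

lemma I_kron_mult_vec:
  assumes "i < 2*d"
  shows "(\<Sum>l<2*d. I_kron U i l * w l) = apply_last U w i"
proof -
  have "(\<Sum>l<2*d. I_kron U i l * w l) =
     (\<Sum>a<d. (if i div 2 = a then U (i mod 2) 0 * w (2*a) + U (i mod 2) 1 * w (2*a+1) else 0))"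
    unfolding sum_lessThan_double by (rule sum.cong) (auto simp: I_kron_def)
  also have "\<dots> = U (i mod 2) 0 * w (2*(i div 2)) + U (i mod 2) 1 * w (2*(i div 2)+1)"
    using assms by (simp add: sum.delta)
  finally show ?thesis unfolding apply_last_def sum_lessThan_2 by simp
qed

lemma evolve_pure:
  assumes "i < 2*d" "j < 2*d" "2^n = 2*d"
    and "\<forall>l<2*d. \<forall>k<2*d. \<sigma>h l k = w l * cnj (w k)"
  shows "evolve n U \<sigma>h i j = apply_last U w i * cnj (apply_last U w j)"
proof -
  have "evolve n U \<sigma>h i j = (\<Sum>k<2*d. (\<Sum>l<2*d. I_kron U i l * w l) * cnj (w k) * cnj (I_kron U j k))"
    unfolding evolve_def mmul_def adj_def assms(3) using assms(4)
    by (intro sum.cong) (auto simp: sum_distrib_right mult.assoc)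
  also have "\<dots> = (\<Sum>k<2*d. (\<Sum>l<2*d. I_kron U i l * w l) * cnj (I_kron U j k * w k))"
    by (simp add: mult_ac)
  also have "\<dots> = apply_last U w i * cnj (\<Sum>k<2*d. I_kron U j k * w k)"
    by (simp add: sum_distrib_left cnj_sum I_kron_mult_vec[OF assms(1)])
  finally show ?thesis using I_kron_mult_vec[OF assms(2)] by simp
qed

lemma apply_last_norm:
  assumes "unitary2 U"
  shows "(\<Sum>i<2*d. apply_last U w i * cnj (apply_last U w i)) = (\<Sum>i<2*d. w i * cnj (w i))"
proof -
  have orth: "cnj (U 0 0) * U 0 0 + cnj (U 1 0) * U 1 0 = 1"
          "cnj (U 0 0) * U 0 1 + cnj (U 1 0) * U 1 1 = 0"
          "cnj (U 0 1) * U 0 0 + cnj (U 1 1) * U 1 0 = 0"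
          "cnj (U 0 1) * U 0 1 + cnj (U 1 1) * U 1 1 = 1"
    using assms unfolding unitary2_def mmul_def adj_def sum_lessThan_2 idm_def
    by (auto dest: spec[of _ 0] spec[of _ 1])
  show ?thesis unfolding sum_lessThan_double
  proof (rule sum.cong)
    fix a
    have "apply_last U w (2*a) = U 0 0 * w (2*a) + U 0 1 * w (2*a+1)"
         "apply_last U w (2*a+1) = U 1 0 * w (2*a) + U 1 1 * w (2*a+1)"
      unfolding apply_last_def sum_lessThan_2 by simp_all
    then show "apply_last U w (2*a) * cnj (apply_last U w (2*a))
        + apply_last U w (2*a+1) * cnj (apply_last U w (2*a+1)) =
        w (2*a) * cnj (w (2*a)) + w (2*a+1) * cnj (w (2*a+1))"
      using orth by simp algebra
  qed simp
qed

text \<open>reduced_outer d v w is the operator tr_{1..n-1} |w><v| on the last qubit; in particular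
reduced_outer d w w is the reduced state of |w><w| there.\<close>

definition reduced_outer :: "nat \<Rightarrow> (nat \<Rightarrow> complex) \<Rightarrow> (nat \<Rightarrow> complex) \<Rightarrow> cmat" where
  "reduced_outer d v w = (\<lambda>t s. if t < 2 \<and> s < 2 then (\<Sum>a<d. w (2*a+t) * cnj (v (2*a+s))) else 0)"

lemma mat2_reduced_outer: "mat2 (reduced_outer d v w)"
  unfolding mat2_def reduced_outer_def by auto

lemma inner_apply_last: "(\<Sum>i<2*d. cnj (v i) * apply_last U w i) = tr_prod U (reduced_outer d v w)"
  unfolding tr_prod_sum reduced_outer_def sum_lessThan_double apply_last_def
  by (simp add: sum_lessThan_2) (simp add: sum_distrib_left sum.distrib algebra_simps)

lemma pauli_rot_tr_prod:
  "tr_prod U (mmul 2 (pauli_rot H t) Q) =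
    complex_of_real (cos t) * tr_prod U Q - \<i> * complex_of_real (sin t) * tr_prod U (mmul 2 H Q)"
  unfolding tr_prod_sum mmul_def pauli_rot_def by (simp add: sum_lessThan_2 idm_def algebra_simps)

section \<open>Reduced states of a qubit\<close>

definition det2 :: "cmat \<Rightarrow> complex" where
  "det2 M = M 0 0 * M 1 1 - M 0 1 * M 1 0"

lemma mtrace_square_2: "mtrace 2 (mmul 2 M M) = (mtrace 2 M)\<^sup>2 - 2 * det2 M"
  unfolding mtrace_def mmul_def det2_def by (simp add: sum_lessThan_2 power2_eq_square algebra_simps)

lemma det2_mmul: "det2 (mmul 2 A B) = det2 A * det2 B"
  unfolding mmul_def det2_def by (simp add: sum_lessThan_2 algebra_simps)

lemma cmod_sum_mult_cnj_sq_le: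
  "(cmod (\<Sum>a\<in>I. x a * cnj (y a)))\<^sup>2 \<le> (\<Sum>a\<in>I. (cmod (x a))\<^sup>2) * (\<Sum>a\<in>I. (cmod (y a))\<^sup>2)"
proof -
  have "cmod (\<Sum>a\<in>I. x a * cnj (y a)) \<le> (\<Sum>a\<in>I. cmod (x a) * cmod (y a))"
    using norm_sum[of "\<lambda>a. x a * cnj (y a)" I] by (simp add: norm_mult)
  then have "(cmod (\<Sum>a\<in>I. x a * cnj (y a)))\<^sup>2 \<le> (\<Sum>a\<in>I. cmod (x a) * cmod (y a))\<^sup>2"
    by (intro power_mono) auto
  also have "\<dots> \<le> (\<Sum>a\<in>I. (cmod (x a))\<^sup>2) * (\<Sum>a\<in>I. (cmod (y a))\<^sup>2)"
    by (rule Cauchy_Schwarz_ineq_sum)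
  finally show ?thesis .
qed

lemma reduced_state_trace_det:
  assumes "(\<Sum>i<2*d. w i * cnj (w i)) = 1"
  obtains q :: real where "0 \<le> q" "q \<le> 1/4"
    "mtrace 2 (reduced_outer d w w) = 1" "det2 (reduced_outer d w w) = complex_of_real q"
proof -
  define x where "x = (\<Sum>a<d. (cmod (w (2*a)))\<^sup>2)"
  define y where "y = (\<Sum>a<d. (cmod (w (2*a+1)))\<^sup>2)"
  define c where "c = (\<Sum>a<d. w (2*a) * cnj (w (2*a+1)))"
  have x: "reduced_outer d w w 0 0 = complex_of_real x" and y: "reduced_outer d w w 1 1 = complex_of_real y"
    unfolding reduced_outer_def x_def y_def of_real_sum complex_norm_square by simp_all
  have c: "reduced_outer d w w 0 1 = c" "reduced_outer d w w 1 0 = cnj c"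
    unfolding reduced_outer_def c_def cnj_sum by (simp_all add: mult.commute)
  have det: "det2 (reduced_outer d w w) = complex_of_real (x * y - (cmod c)\<^sup>2)"
    unfolding det2_def x y c of_real_diff of_real_mult complex_norm_square by simp
  have "complex_of_real (x + y) = (\<Sum>i<2*d. w i * cnj (w i))"
    unfolding x_def y_def sum_lessThan_double of_real_add of_real_sum complex_norm_square
    by (simp add: sum.distrib)
  then have xy: "x + y = 1" using assms by (metis of_real_1 of_real_eq_iff)
  have cauchy_schwarz: "(cmod c)\<^sup>2 \<le> x * y"
    unfolding x_def y_def c_def by (rule cmod_sum_mult_cnj_sq_le)
  have am_gm: "x * y \<le> 1/4"
  proof -
    have "0 \<le> (x - y)\<^sup>2" by simp
    then have "4 * (x * y) \<le> (x + y)\<^sup>2" by (simp add: power2_eq_square algebra_simps)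
    then show ?thesis using xy by simp
  qed
  have tr: "mtrace 2 (reduced_outer d w w) = 1"
    unfolding mtrace_def sum_lessThan_2 x y using xy by (metis of_real_1 of_real_add)
  have "0 \<le> (cmod c)\<^sup>2" by simp
  with cauchy_schwarz am_gm show ?thesis
    by (intro that[OF _ _ tr det]) linarith+
qed

lemma variance_poly_bounds:
  fixes q :: real
  assumes "0 \<le> q" "q \<le> 1/4"
  shows "16/27 \<le> 8/9 - 32/9 * q + 32/3 * q\<^sup>2" "8/9 - 32/9 * q + 32/3 * q\<^sup>2 \<le> 8/9"
proof -
  have "0 \<le> 32/3 * (q - 1/6)\<^sup>2" by simp
  then show "16/27 \<le> 8/9 - 32/9 * q + 32/3 * q\<^sup>2" by (simp add: power2_eq_square algebra_simps)
  have "0 \<le> q * (1 - 3*q)" using assms by (intro mult_nonneg_nonneg) auto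
  then show "8/9 - 32/9 * q + 32/3 * q\<^sup>2 \<le> 8/9" by (simp add: power2_eq_square algebra_simps)
qed

locale pure_pair =
  fixes n d :: nat and \<rho> \<sigma>h :: cmat and v w :: "nat \<Rightarrow> complex"
  assumes dim: "2^n = 2*d"
    and rho_eq: "\<forall>i<2*d. \<forall>j<2*d. \<rho> i j = v i * cnj (v j)"
    and sigma_eq: "\<forall>i<2*d. \<forall>j<2*d. \<sigma>h i j = w i * cnj (w j)"
    and v_norm: "(\<Sum>i<2*d. v i * cnj (v i)) = 1"
    and w_norm: "(\<Sum>i<2*d. w i * cnj (w i)) = 1"
begin

lemma C_n_eq:
  assumes "unitary2 Up" "unitary2 Um" "is_pauli H"
  shows "C_n n \<rho> \<sigma>h H Up Um t =
    2 - 2 * (cmod (tr_prod Up (mmul 2 (pauli_rot H t) (mmul 2 Um (reduced_outer d v w)))))\<^sup>2"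
proof -
  define W where "W = mmul 2 (mmul 2 Up (pauli_rot H t)) Um"
  have W: "unitary2 W" unfolding W_def by (intro unitary2_mmul unitary2_pauli_rot assms)
  have "C_n n \<rho> \<sigma>h H Up Um t = cost n \<rho> (evolve n W \<sigma>h)"
    unfolding C_n_def W_def ..
  also have "\<dots> = 2 - 2 * (cmod (\<Sum>i<2*d. cnj (v i) * apply_last W w i))\<^sup>2"
    using evolve_pure[OF _ _ dim sigma_eq] apply_last_norm[OF W] w_norm
    by (intro cost_pure_states[OF dim[symmetric] rho_eq _ v_norm]) auto
  also have "(\<Sum>i<2*d. cnj (v i) * apply_last W w i) =
      tr_prod Up (mmul 2 (pauli_rot H t) (mmul 2 Um (reduced_outer d v w)))"
    unfolding inner_apply_last tr_prod_def W_def by (simp add: mmul_assoc)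
  finally show ?thesis .
qed

text \<open>Since exp(-i theta H) commutes with H, differentiation in theta multiplies Y by -i H.\<close>

lemma dC_n_eq:
  fixes \<theta> :: real
  assumes "unitary2 Up" "unitary2 Um" "is_pauli H"
  defines "Y \<equiv> mmul 2 (pauli_rot H \<theta>) (mmul 2 Um (reduced_outer d v w))"
  shows "complex_of_real (dC_n n \<rho> \<sigma>h H Up Um \<theta>) = cost_slope (tr_prod Up Y) (tr_prod Up (mmul 2 H Y))"
proof -
  define Q where "Q = mmul 2 Um (reduced_outer d v w)"
  have Q: "mat2 Q"
    unfolding Q_def using assms(2) by (intro mat2_mmul mat2_reduced_outer) (simp add: unitary2_def)
  have HY: "mmul 2 H Y = mmul 2 (pauli_rot H \<theta>) (mmul 2 H Q)"
    unfolding Y_def Q_def[symmetric] using pauli_rot_commute[OF assms(3)]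
    by (metis mmul_assoc)
  show ?thesis
    unfolding dC_n_def HY unfolding Y_def Q_def[symmetric] pauli_rot_tr_prod pauli_mmul_self[OF assms(3) Q]
    by (rule deriv_cost_rotation) (simp add: C_n_eq[OF assms(1-3)] pauli_rot_tr_prod Q_def)
qed

lemma expect2_dC_n_eq_0:
  assumes "is_pauli H" "unitary_design 2 D"
  shows "expect2 D (\<lambda>Up Um. dC_n n \<rho> \<sigma>h H Up Um \<theta>) = 0"
proof -
  have D: "finite D" "D \<noteq> {}" "\<And>U. U \<in> D \<Longrightarrow> unitary2 U"
    using assms(2) unfolding unitary_design_def by auto
  have "complex_of_real (expect2 D (\<lambda>Up Um. dC_n n \<rho> \<sigma>h H Up Um \<theta>)) =
      design_avg D (\<lambda>Um. design_avg D (\<lambda>Up. complex_of_real (dC_n n \<rho> \<sigma>h H Up Um \<theta>)))"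
    by (rule expect2_eq_design_avg)
  also have "\<dots> = design_avg D (\<lambda>Um. 0)"
  proof (rule design_avg_cong)
    fix Um assume "Um \<in> D"
    then have "design_avg D (\<lambda>Up. complex_of_real (dC_n n \<rho> \<sigma>h H Up Um \<theta>)) =
      design_avg D (\<lambda>Up. cost_slope (tr_prod Up (mmul 2 (pauli_rot H \<theta>) (mmul 2 Um (reduced_outer d v w))))
        (tr_prod Up (mmul 2 H (mmul 2 (pauli_rot H \<theta>) (mmul 2 Um (reduced_outer d v w))))))"
      using D(3) dC_n_eq[OF _ _ assms(1)] by (intro design_avg_cong) auto
    also have "\<dots> = 0"
      by (rule design_avg_cost_slope_eq_0[OF assms(2) adj_pauli[OF assms(1)]])
    finally show "design_avg D (\<lambda>Up. complex_of_real (dC_n n \<rho> \<sigma>h H Up Um \<theta>)) = 0" .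
  qed
  also have "\<dots> = 0" by (rule design_avg_const[OF D(1,2)])
  finally show ?thesis by simp
qed

lemma expect2_dC_n_sq:
  assumes "is_pauli H" "unitary_design 2 D"
  defines "P \<equiv> mmul 2 (reduced_outer d v w) (adj (reduced_outer d v w))"
  shows "complex_of_real (expect2 D (\<lambda>Up Um. (dC_n n \<rho> \<sigma>h H Up Um \<theta>)\<^sup>2)) =
    40/9 * (mtrace 2 P)\<^sup>2 - 32/9 * mtrace 2 (mmul 2 P P)"
proof -
  have D: "finite D" "D \<noteq> {}" "\<And>U. U \<in> D \<Longrightarrow> unitary2 U"
    using assms(2) unfolding unitary_design_def by auto
  have "complex_of_real (expect2 D (\<lambda>Up Um. (dC_n n \<rho> \<sigma>h H Up Um \<theta>)\<^sup>2)) =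
      design_avg D (\<lambda>Um. design_avg D (\<lambda>Up. complex_of_real ((dC_n n \<rho> \<sigma>h H Up Um \<theta>)\<^sup>2)))"
    by (rule expect2_eq_design_avg)
  also have "\<dots> = design_avg D (\<lambda>Um. 4 * (mtrace 2 P)\<^sup>2 - 8/3 * mtrace 2 (mmul 2 P P)
      - 4/3 * (tr_conj_prod Um H P)\<^sup>2)"
  proof (rule design_avg_cong)
    fix Um assume Um: "Um \<in> D"
    define Y where "Y = mmul 2 (pauli_rot H \<theta>) (mmul 2 Um (reduced_outer d v w))"
    have "design_avg D (\<lambda>Up. complex_of_real ((dC_n n \<rho> \<sigma>h H Up Um \<theta>)\<^sup>2)) =
        design_avg D (\<lambda>Up. (cost_slope (tr_prod Up Y) (tr_prod Up (mmul 2 H Y)))\<^sup>2)"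
      using D(3) Um dC_n_eq[OF _ _ assms(1)] unfolding Y_def by (intro design_avg_cong) simp
    also have "\<dots> = 4 * (mtrace 2 P)\<^sup>2 - 8/3 * mtrace 2 (mmul 2 P P) - 4/3 * (tr_conj_prod Um H P)\<^sup>2"
      unfolding design_avg_cost_slope_sq[OF assms(2,1)] Y_def P_def
        rotated_conj_traces[OF D(3)[OF Um] assms(1) mat2_reduced_outer] ..
    finally show "design_avg D (\<lambda>Up. complex_of_real ((dC_n n \<rho> \<sigma>h H Up Um \<theta>)\<^sup>2)) = \<dots>" .
  qed
  also have "\<dots> = 4 * (mtrace 2 P)\<^sup>2 - 8/3 * mtrace 2 (mmul 2 P P)
      - 4/3 * design_avg D (\<lambda>Um. (tr_conj_prod Um H P)\<^sup>2)"
    by (simp only: design_avg_diff design_avg_mult_left design_avg_const[OF D(1,2)])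
  also have "\<dots> = 40/9 * (mtrace 2 P)\<^sup>2 - 32/9 * mtrace 2 (mmul 2 P P)"
    unfolding design_avg_tr_pauli_conj_sq[OF assms(2,1)] by (simp add: field_simps)
  finally show ?thesis .
qed

lemma reduced_outer_mult_adj:
  assumes "\<forall>i<d. \<forall>j<d. ptrace_last \<rho> i j = ptrace_last \<sigma>h i j"
  shows "mmul 2 (reduced_outer d v w) (adj (reduced_outer d v w)) =
    mmul 2 (reduced_outer d w w) (reduced_outer d w w)"
proof (intro ext)
  fix i j :: nat
  have ptrace: "(\<Sum>s<2. v (2*b+s) * cnj (v (2*a+s))) = (\<Sum>s<2. w (2*b+s) * cnj (w (2*a+s)))"
    if "a < d" "b < d" for a b
    using assms that rho_eq sigma_eq unfolding ptrace_last_def sum_lessThan_2 by simp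
  show "mmul 2 (reduced_outer d v w) (adj (reduced_outer d v w)) i j =
      mmul 2 (reduced_outer d w w) (reduced_outer d w w) i j"
  proof (cases "i < 2 \<and> j < 2")
    case True
    have "mmul 2 (reduced_outer d v w) (adj (reduced_outer d v w)) i j =
      (\<Sum>a<d. \<Sum>b<d. (w (2*a+i) * cnj (w (2*b+j))) * (\<Sum>s<2. v (2*b+s) * cnj (v (2*a+s))))"
      using True unfolding mmul_def adj_def reduced_outer_def
      by (simp add: sum_lessThan_2 cnj_sum sum_distrib_left sum_distrib_right sum.distrib algebra_simps)
    also have "\<dots> = (\<Sum>a<d. \<Sum>b<d. (w (2*a+i) * cnj (w (2*b+j))) * (\<Sum>s<2. w (2*b+s) * cnj (w (2*a+s))))"
      using ptrace by (intro sum.cong refl) auto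
    also have "\<dots> = mmul 2 (reduced_outer d w w) (reduced_outer d w w) i j"
      using True unfolding mmul_def reduced_outer_def
      by (simp add: sum_lessThan_2 sum_distrib_left sum_distrib_right sum.distrib algebra_simps)
    finally show ?thesis .
  next
    case False
    then show ?thesis unfolding mmul_def adj_def reduced_outer_def by auto
  qed
qed

end

theorem propositionS2:
  fixes n :: nat and \<rho> \<sigma>h H :: cmat and D :: "cmat set" and \<theta> :: real
  assumes "n \<ge> 1"
    and "pure_state (2^n) \<rho>"
    and "pure_state (2^n) \<sigma>h"
    and "\<forall>i<2^(n-1). \<forall>j<2^(n-1). ptrace_last \<rho> i j = ptrace_last \<sigma>h i j"
    and "is_pauli H"
    and "unitary_design 2 D"
  shows "expect2 D (\<lambda>Up Um. dC_n n \<rho> \<sigma>h H Up Um \<theta>) = 0 \<and>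
         16/27 \<le> variance2 D (\<lambda>Up Um. dC_n n \<rho> \<sigma>h H Up Um \<theta>) \<and>
         variance2 D (\<lambda>Up Um. dC_n n \<rho> \<sigma>h H Up Um \<theta>) \<le> 8/9"
proof -
  define d where "d = (2::nat)^(n-1)"
  have dim: "(2::nat)^n = 2*d" using assms(1) unfolding d_def by (cases n) auto
  have reduced: "\<forall>i<d. \<forall>j<d. ptrace_last \<rho> i j = ptrace_last \<sigma>h i j"
    using assms(4) unfolding d_def .
  obtain v where v: "(\<Sum>i<2*d. v i * cnj (v i)) = 1" "\<forall>i<2*d. \<forall>j<2*d. \<rho> i j = v i * cnj (v j)"
    using pure_state_vector[OF assms(2)] unfolding dim .
  obtain w where w: "(\<Sum>i<2*d. w i * cnj (w i)) = 1" "\<forall>i<2*d. \<forall>j<2*d. \<sigma>h i j = w i * cnj (w j)"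
    using pure_state_vector[OF assms(3)] unfolding dim .
  interpret pure_pair n d \<rho> \<sigma>h v w
    using dim v w by unfold_locales auto
  define G where "G = reduced_outer d w w"
  obtain q where q: "0 \<le> q" "q \<le> 1/4" and G: "mtrace 2 G = 1" "det2 G = complex_of_real q"
    using reduced_state_trace_det[OF w_norm] unfolding G_def .
  let ?g = "\<lambda>Up Um. dC_n n \<rho> \<sigma>h H Up Um \<theta>"
  have mean: "expect2 D ?g = 0" by (rule expect2_dC_n_eq_0[OF assms(5,6)])
  have "complex_of_real (expect2 D (\<lambda>Up Um. (?g Up Um)\<^sup>2)) =
      40/9 * (mtrace 2 (mmul 2 G G))\<^sup>2 - 32/9 * mtrace 2 (mmul 2 (mmul 2 G G) (mmul 2 G G))"
    using expect2_dC_n_sq[OF assms(5,6)] unfolding reduced_outer_mult_adj[OF reduced] G_def .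
  also have "\<dots> = complex_of_real (8/9 - 32/9 * q + 32/3 * q\<^sup>2)"
    unfolding mtrace_square_2 det2_mmul G by (simp add: power2_eq_square algebra_simps)
  finally have "variance2 D ?g = 8/9 - 32/9 * q + 32/3 * q\<^sup>2"
    unfolding variance2_def mean of_real_eq_iff by simp
  then show ?thesis using mean variance_poly_bounds[OF q] by simp
qed

end
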